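(* Let $X$ be a Banach space with dual $X^{\ast}$, and let $X_d$ be a sequence space as described in the context. Let $\{x_n\}\subset X$ and $\{y_n\}\subset X^{\ast}$ be such that for all $y\in X^{\ast}$ and all $x\in X$ $$\{(x_n,y)\}_{n}\in X_d^{\ast}\quad\text{and}\quad \{(x,y_n)\}_n\in X_d,$$ and suppose that for every $x\in X$ $$x=\sum_{n=1}^\infty (x,y_n)\,x_n .$$ Then $\{x_n\}$ and $\{y_n\}$ form a cross-frame.
   Context: $X$ is a Banach space, $X^{\ast}$ its dual, and $(x,y)$ denotes the value of $y\in X^{\ast}$ at $x\in X$. $X_d$ is a Banach space of scalar sequences $a=\{a_n\}$ in which the unit vectors $\varepsilon_n=\{\delta_{nj}\}_j$ form a basis; its dual $X_d^{\ast}$ is identified with a space of sequences via $b\mapsto\{b(\varepsilon_n)\}$, and it is assumed that the coordinate functionals $\{\varepsilon_n^{\ast}\}$ form a basis of $X_d^{\ast}$. The pairing of $a\in X_d$ with $b\in X_d^{\ast}$ is $\sum a_nb_n$. A sequence $\{y_n\}\subset X^{\ast}$ is a frame if there are $A,B>0$ such that $\{(x,y_n)\}\in X_d$ and $A\|x\|_X\le \|\{(x,y_n)\}\|_{X_d}\le B\|x\|_X$ for all $x\in X$. A sequence $\{x_n\}\subset X$ is a co-frame if $\{(x_n,y)\}\in X_d^{\ast}$ for all $y\in X^{\ast}$ and there are $\tilde A,\tilde B>0$ with $\tilde A\|y\|_{X^{\ast}}\le \|\{(x_n,y)\}\|_{X_d^{\ast}}\le \tilde B\|y\|_{X^{\ast}}$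 for all $y\in X^{\ast}$. A co-frame $\{x_n\}$ and a frame $\{y_n\}$ form a cross-frame if $x=\sum_n (x,y_n)x_n$ for all $x\in X$ and $y=\sum_n (x_n,y)y_n$ for all $y\in X^{\ast}$. *)

theory Defs
  imports "HOL-Analysis.Analysis"
begin

text \<open>Sequence spaces X_d are modelled as a set S of real sequences together with
 a norm N on S. The unit vectors:\<close>

definition unit_vec :: "nat \<Rightarrow> nat \<Rightarrow> real" where
  "unit_vec n = (\<lambda>j. if j = n then 1 else 0)"

definition trunc_seq :: "(nat \<Rightarrow> real) \<Rightarrow> nat \<Rightarrow> nat \<Rightarrow> real" where
  "trunc_seq c k = (\<lambda>j. \<Sum>n<k. c n * unit_vec n j)"

definition seq_banach :: "(nat \<Rightarrow> real) set \<Rightarrow> ((nat \<Rightarrow> real) \<Rightarrow> real) \<Rightarrow> bool" where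
  "seq_banach S N \<longleftrightarrow>
     (\<lambda>j. 0) \<in> S \<and>
     (\<forall>a\<in>S. \<forall>b\<in>S. (\<lambda>j. a j + b j) \<in> S) \<and>
     (\<forall>a\<in>S. \<forall>c. (\<lambda>j. c * a j) \<in> S) \<and>
     (\<forall>a\<in>S. 0 \<le> N a \<and> (N a = 0 \<longleftrightarrow> a = (\<lambda>j. 0))) \<and>
     (\<forall>a\<in>S. \<forall>c. N (\<lambda>j. c * a j) = \<bar>c\<bar> * N a) \<and>
     (\<forall>a\<in>S. \<forall>b\<in>S. N (\<lambda>j. a j + b j) \<le> N a + N b) \<and>
     (\<forall>u. (\<forall>k. u k \<in> S) \<and> (\<forall>e>0. \<exists>M. \<forall>m\<ge>M. \<forall>k\<ge>M. N (\<lambda>j. u m j - u k j) < e)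
          \<longrightarrow> (\<exists>a\<in>S. (\<lambda>k. N (\<lambda>j. u k j - a j)) \<longlonglongrightarrow> 0))"

definition unit_vectors_basis :: "(nat \<Rightarrow> real) set \<Rightarrow> ((nat \<Rightarrow> real) \<Rightarrow> real) \<Rightarrow> bool" where
  "unit_vectors_basis S N \<longleftrightarrow>
     (\<forall>n. unit_vec n \<in> S) \<and>
     (\<forall>a\<in>S. \<forall>c. (\<lambda>k. N (\<lambda>j. a j - trunc_seq c k j)) \<longlonglongrightarrow> 0 \<longleftrightarrow> c = a)"

text \<open>Membership in the dual X_d^*, identified with sequences b = (f(e_n))_n for
 bounded linear functionals f on (S,N).\<close>
definition in_dual :: "(nat \<Rightarrow> real) set \<Rightarrow> ((nat \<Rightarrow> real) \<Rightarrow> real) \<Rightarrow> (nat \<Rightarrow> real) \<Rightarrow> bool" where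
  "in_dual S N b \<longleftrightarrow>
     (\<exists>f. (\<forall>a\<in>S. \<forall>a'\<in>S. f (\<lambda>j. a j + a' j) = f a + f a') \<and>
          (\<forall>a\<in>S. \<forall>c. f (\<lambda>j. c * a j) = c * f a) \<and>
          (\<exists>K. \<forall>a\<in>S. \<bar>f a\<bar> \<le> K * N a) \<and>
          (\<forall>n. f (unit_vec n) = b n))"

definition dual_norm :: "(nat \<Rightarrow> real) set \<Rightarrow> ((nat \<Rightarrow> real) \<Rightarrow> real) \<Rightarrow> (nat \<Rightarrow> real) \<Rightarrow> real" where
  "dual_norm S N b = (SUP a\<in>{a\<in>S. N a \<le> 1}. \<bar>\<Sum>n. a n * b n\<bar>)"

definition coord_functionals_basis :: "(nat \<Rightarrow> real) set \<Rightarrow> ((nat \<Rightarrow> real) \<Rightarrow> real) \<Rightarrow> bool" where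
  "coord_functionals_basis S N \<longleftrightarrow>
     (\<forall>b. in_dual S N b \<longrightarrow>
        (\<forall>c. (\<lambda>k. dual_norm S N (\<lambda>j. b j - trunc_seq c k j)) \<longlonglongrightarrow> 0 \<longleftrightarrow> c = b))"

definition is_frame :: "(nat \<Rightarrow> real) set \<Rightarrow> ((nat \<Rightarrow> real) \<Rightarrow> real)
    \<Rightarrow> (nat \<Rightarrow> ('a::banach \<Rightarrow>\<^sub>L real)) \<Rightarrow> bool" where
  "is_frame S N y \<longleftrightarrow>
     (\<forall>x. (\<lambda>n. blinfun_apply (y n) x) \<in> S) \<and>
     (\<exists>A B. A > 0 \<and> B > 0 \<and> (\<forall>x. A * norm x \<le> N (\<lambda>n. blinfun_apply (y n) x) \<and>
                                   N (\<lambda>n. blinfun_apply (y n) x) \<le> B * norm x))"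

definition is_coframe :: "(nat \<Rightarrow> real) set \<Rightarrow> ((nat \<Rightarrow> real) \<Rightarrow> real)
    \<Rightarrow> (nat \<Rightarrow> 'a::banach) \<Rightarrow> bool" where
  "is_coframe S N x \<longleftrightarrow>
     (\<forall>y::'a \<Rightarrow>\<^sub>L real. in_dual S N (\<lambda>n. blinfun_apply y (x n))) \<and>
     (\<exists>A B. A > 0 \<and> B > 0 \<and> (\<forall>y::'a \<Rightarrow>\<^sub>L real.
        A * norm y \<le> dual_norm S N (\<lambda>n. blinfun_apply y (x n)) \<and>
        dual_norm S N (\<lambda>n. blinfun_apply y (x n)) \<le> B * norm y))"

definition is_cross_frame :: "(nat \<Rightarrow> real) set \<Rightarrow> ((nat \<Rightarrow> real) \<Rightarrow> real)
    \<Rightarrow> (nat \<Rightarrow> 'a::banach) \<Rightarrow> (nat \<Rightarrow> ('a \<Rightarrow>\<^sub>L real)) \<Rightarrow> bool" where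
  "is_cross_frame S N x y \<longleftrightarrow>
     is_coframe S N x \<and> is_frame S N y \<and>
     (\<forall>z. (\<lambda>n. blinfun_apply (y n) z *\<^sub>R x n) sums z) \<and>
     (\<forall>g::'a \<Rightarrow>\<^sub>L real. (\<lambda>n. blinfun_apply g (x n) *\<^sub>R y n) sums g)"

end

theory Submission
  imports Defs
begin

text \<open>Both upper bounds come from the uniform boundedness principle applied to truncated sums.
  For the frame bound the seminorms are z \<mapsto> N (trunc_seq ((z, y n)) k); they are pointwise
  bounded because the unit vectors form a basis of X_d. For the co-frame bound they are
  g \<mapsto> |\<Sum>n<k. a n (x n, g)| with a in the unit ball of X_d; these are pointwise bounded by the
  basis constant of the unit vectors, which comes from Baire's theorem in X_d.
  Pairing the reconstruction formula with g gives (x, g) = \<Sum> (x, y n) (x n, g), hence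
  |(x, g)| \<le> \<parallel>((x n, g))\<parallel> \<parallel>((x, y n))\<parallel>. Together with a norming functional (Hahn-Banach)
  and the co-frame upper bound this is the lower frame bound, together with the frame upper
  bound it is the lower co-frame bound, and applied to the tails of ((x n, g)), which tend
  to 0 in the dual of X_d because the coordinate functionals form a basis, it gives the dual expansion
  g = \<Sum> (x n, g) y n.\<close>

text \<open>Partial norming functionals are encoded by their graphs, so that the upper bound of a chain
  in Zorn's lemma is simply its union.\<close>

definition dominated_graph :: "'a::real_normed_vector \<Rightarrow> ('a \<times> real) set \<Rightarrow> bool" where
  "dominated_graph z G \<longleftrightarrow>
     (\<forall>u a b. (u, a) \<in> G \<longrightarrow> (u, b) \<in> G \<longrightarrow> a = b) \<and>
     (\<forall>u a v b. (u, a) \<in> G \<longrightarrow> (v, b) \<in> G \<longrightarrow> (u + v, a + b) \<in> G) \<and>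
     (\<forall>u a c. (u, a) \<in> G \<longrightarrow> (c *\<^sub>R u, c * a) \<in> G) \<and>
     (\<forall>u a. (u, a) \<in> G \<longrightarrow> a \<le> norm u) \<and>
     (z, norm z) \<in> G"

lemma dominated_graph_line: "dominated_graph z {(t *\<^sub>R z, t * norm z) | t. True}"
  unfolding dominated_graph_def
proof (intro conjI allI impI)
  fix u a b
  assume "(u, a) \<in> {(t *\<^sub>R z, t * norm z) | t. True}" "(u, b) \<in> {(t *\<^sub>R z, t * norm z) | t. True}"
  then obtain t s where "u = t *\<^sub>R z" "a = t * norm z" "u = s *\<^sub>R z" "b = s * norm z"
    by blast
  then show "a = b"
    by (metis mult_cancel_right norm_zero scaleR_cancel_right)
next
  fix u a v b
  assume "(u, a) \<in> {(t *\<^sub>R z, t * norm z) | t. True}" "(v, b) \<in> {(t *\<^sub>R z, t * norm z) | t. True}"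
  then obtain t s where "u = t *\<^sub>R z" "a = t * norm z" "v = s *\<^sub>R z" "b = s * norm z"
    by blast
  then show "(u + v, a + b) \<in> {(t *\<^sub>R z, t * norm z) | t. True}"
    by (auto intro!: exI[of _ "t + s"] simp: algebra_simps)
next
  fix u a c
  assume "(u, a) \<in> {(t *\<^sub>R z, t * norm z) | t. True}"
  then obtain t where "u = t *\<^sub>R z" "a = t * norm z"
    by blast
  then show "(c *\<^sub>R u, c * a) \<in> {(t *\<^sub>R z, t * norm z) | t. True}"
    by (auto intro!: exI[of _ "c * t"])
next
  fix u a
  assume "(u, a) \<in> {(t *\<^sub>R z, t * norm z) | t. True}"
  then show "a \<le> norm u"
    by (auto intro!: mult_right_mono)
qed (auto intro!: exI[of _ 1])

lemma dominated_graph_Union_chain: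
  assumes "C \<in> chains {G. dominated_graph z G}" "C \<noteq> {}"
  shows "dominated_graph z (\<Union>C)"
proof -
  have C: "\<And>G. G \<in> C \<Longrightarrow> dominated_graph z G"
    and comparable: "\<And>G H. G \<in> C \<Longrightarrow> H \<in> C \<Longrightarrow> G \<subseteq> H \<or> H \<subseteq> G"
    using assms(1) unfolding chains_def chain_subset_def by auto
  have common: "\<exists>G\<in>C. p \<in> G \<and> q \<in> G" if "p \<in> \<Union>C" "q \<in> \<Union>C" for p q
    using that comparable by blast
  show ?thesis
    unfolding dominated_graph_def
  proof (intro conjI allI impI)
    fix u a b
    assume "(u, a) \<in> \<Union>C" "(u, b) \<in> \<Union>C"
    then obtain G where "G \<in> C" "(u, a) \<in> G" "(u, b) \<in> G"
      using common by blast
    then show "a = b"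
      using C unfolding dominated_graph_def by blast
  next
    fix u a v b
    assume "(u, a) \<in> \<Union>C" "(v, b) \<in> \<Union>C"
    then obtain G where "G \<in> C" "(u, a) \<in> G" "(v, b) \<in> G"
      using common by blast
    then show "(u + v, a + b) \<in> \<Union>C"
      using C unfolding dominated_graph_def by blast
  next
    fix u a c
    assume "(u, a) \<in> \<Union>C"
    then obtain G where "G \<in> C" "(u, a) \<in> G"
      by blast
    then show "(c *\<^sub>R u, c * a) \<in> \<Union>C"
      using C unfolding dominated_graph_def by blast
  next
    fix u a
    assume "(u, a) \<in> \<Union>C"
    then obtain G where "G \<in> C" "(u, a) \<in> G"
      by blast
    then show "a \<le> norm u"
      using C unfolding dominated_graph_def by blast
  next
    obtain G where "G \<in> C"
      using assms(2) by blast
    then show "(z, norm z) \<in> \<Union>C"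
      using C unfolding dominated_graph_def by blast
  qed
qed

lemma dominated_graph_zero: "dominated_graph z G \<Longrightarrow> (0, 0) \<in> G"
  unfolding dominated_graph_def by (metis mult_zero_left scaleR_zero_left)

lemma dominated_graph_extension_value:
  assumes "dominated_graph z M"
  obtains c where "\<And>u a. (u, a) \<in> M \<Longrightarrow> a - norm (u - w) \<le> c"
    and "\<And>v b. (v, b) \<in> M \<Longrightarrow> c \<le> norm (v + w) - b"
proof -
  have separated: "a - norm (u - w) \<le> norm (v + w) - b" if "(u, a) \<in> M" "(v, b) \<in> M" for u a v b
  proof -
    have "a + b \<le> norm (u + v)"
      using assms that unfolding dominated_graph_def by blast
    also have "\<dots> \<le> norm (u - w) + norm (v + w)"
      using norm_triangle_ineq[of "u - w" "v + w"] by simp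
    finally show ?thesis by simp
  qed
  define L where "L = {a - norm (u - w) | u a. (u, a) \<in> M}"
  have "L \<noteq> {}"
    using dominated_graph_zero[OF assms] unfolding L_def by blast
  moreover have "bdd_above L"
    unfolding bdd_above_def L_def using separated[OF _ dominated_graph_zero[OF assms]] by auto
  ultimately show ?thesis
  proof (intro that[of "Sup L"])
    show "a - norm (u - w) \<le> Sup L" if "(u, a) \<in> M" for u a
      using \<open>bdd_above L\<close> that unfolding L_def by (intro cSup_upper) auto
    show "Sup L \<le> norm (v + w) - b" if "(v, b) \<in> M" for v b
      using \<open>L \<noteq> {}\<close> separated that unfolding L_def by (intro cSup_least) auto
  qed
qed

lemma extension_value_dominated:
  assumes scale: "\<And>u a s. (u, a) \<in> M \<Longrightarrow> (s *\<^sub>R u, s * a) \<in> M"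
    and dominated: "\<And>u a. (u, a) \<in> M \<Longrightarrow> a \<le> norm u"
    and lower: "\<And>u a. (u, a) \<in> M \<Longrightarrow> a - norm (u - w) \<le> c"
    and upper: "\<And>u a. (u, a) \<in> M \<Longrightarrow> c \<le> norm (u + w) - a"
    and "(u, a) \<in> M"
  shows "a + t * c \<le> norm (u + t *\<^sub>R w)"
proof (cases t "0 :: real" rule: linorder_cases)
  case less
  have "- a / t - norm ((- 1 / t) *\<^sub>R u - w) \<le> c"
    using lower[OF scale[OF \<open>(u, a) \<in> M\<close>, of "- 1 / t"]] by simp
  then have "a + t * c \<le> - t * norm ((- 1 / t) *\<^sub>R u - w)"
    using less by (simp add: field_simps)
  also have "\<dots> = norm ((- t) *\<^sub>R ((- 1 / t) *\<^sub>R u - w))"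
    using less by simp
  also have "(- t) *\<^sub>R ((- 1 / t) *\<^sub>R u - w) = u + t *\<^sub>R w"
    using less by (simp add: algebra_simps)
  finally show ?thesis .
next
  case equal
  then show ?thesis
    using dominated[OF \<open>(u, a) \<in> M\<close>] by simp
next
  case greater
  have "c \<le> norm ((1 / t) *\<^sub>R u + w) - a / t"
    using upper[OF scale[OF \<open>(u, a) \<in> M\<close>, of "1 / t"]] by simp
  then have "a + t * c \<le> t * norm ((1 / t) *\<^sub>R u + w)"
    using greater by (simp add: field_simps)
  also have "\<dots> = norm (t *\<^sub>R ((1 / t) *\<^sub>R u + w))"
    using greater by simp
  also have "t *\<^sub>R ((1 / t) *\<^sub>R u + w) = u + t *\<^sub>R w"
    using greater by (simp add: algebra_simps)
  finally show ?thesis .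
qed

lemma dominated_graph_coefficient_unique:
  assumes M: "dominated_graph z M" and w: "\<And>a. (w, a) \<notin> M"
    and "(u, a) \<in> M" "(u', a') \<in> M" "u + t *\<^sub>R w = u' + t' *\<^sub>R w"
  shows "t = t'"
proof (rule ccontr)
  assume "t \<noteq> t'"
  have add: "\<And>u a v b. (u, a) \<in> M \<Longrightarrow> (v, b) \<in> M \<Longrightarrow> (u + v, a + b) \<in> M"
    and scale: "\<And>u a s. (u, a) \<in> M \<Longrightarrow> (s *\<^sub>R u, s * a) \<in> M"
    using M unfolding dominated_graph_def by blast+
  have "((1 / (t - t')) *\<^sub>R (u' + (- 1) *\<^sub>R u), (1 / (t - t')) * (a' + (- 1) * a)) \<in> M"
    using assms(3,4) by (intro scale add)
  moreover have "u' + (- 1) *\<^sub>R u = (t - t') *\<^sub>R w"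
    using assms(5) by (simp add: algebra_simps)
  then have "(1 / (t - t')) *\<^sub>R (u' + (- 1) *\<^sub>R u) = w"
    using \<open>t \<noteq> t'\<close> by simp
  ultimately show False
    using w by metis
qed

lemma dominated_graph_extension:
  assumes M: "dominated_graph z M" and w: "\<And>a. (w, a) \<notin> M"
    and lower: "\<And>u a. (u, a) \<in> M \<Longrightarrow> a - norm (u - w) \<le> c"
    and upper: "\<And>u a. (u, a) \<in> M \<Longrightarrow> c \<le> norm (u + w) - a"
  shows "dominated_graph z {(u + t *\<^sub>R w, a + t * c) | u a t. (u, a) \<in> M}" (is "dominated_graph z ?G")
  unfolding dominated_graph_def
proof (intro conjI allI impI)
  fix p a b
  assume "(p, a) \<in> ?G" "(p, b) \<in> ?G"
  then obtain u a0 t u' b0 t' where "(u, a0) \<in> M" "p = u + t *\<^sub>R w" "a = a0 + t * c"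
    "(u', b0) \<in> M" "p = u' + t' *\<^sub>R w" "b = b0 + t' * c"
    by blast
  moreover from this have "t = t'"
    using dominated_graph_coefficient_unique[OF M w] by metis
  ultimately show "a = b"
    using M unfolding dominated_graph_def by auto
next
  fix p a q b
  assume "(p, a) \<in> ?G" "(q, b) \<in> ?G"
  then obtain u a0 t v b0 s where "(u, a0) \<in> M" "p = u + t *\<^sub>R w" "a = a0 + t * c"
    "(v, b0) \<in> M" "q = v + s *\<^sub>R w" "b = b0 + s * c"
    by blast
  moreover from this have "(u + v, a0 + b0) \<in> M"
    using M unfolding dominated_graph_def by blast
  moreover from calculation have "p + q = (u + v) + (t + s) *\<^sub>R w" "a + b = (a0 + b0) + (t + s) * c"
    by (simp_all add: algebra_simps)
  ultimately show "(p + q, a + b) \<in> ?G"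
    by blast
next
  fix p a r
  assume "(p, a) \<in> ?G"
  then obtain u a0 t where "(u, a0) \<in> M" "p = u + t *\<^sub>R w" "a = a0 + t * c"
    by blast
  moreover from this have "(r *\<^sub>R u, r * a0) \<in> M"
    using M unfolding dominated_graph_def by blast
  moreover from calculation have "r *\<^sub>R p = r *\<^sub>R u + (r * t) *\<^sub>R w" "r * a = r * a0 + (r * t) * c"
    by (simp_all add: algebra_simps)
  ultimately show "(r *\<^sub>R p, r * a) \<in> ?G"
    by blast
next
  fix p a
  assume "(p, a) \<in> ?G"
  moreover have "\<And>u a s. (u, a) \<in> M \<Longrightarrow> (s *\<^sub>R u, s * a) \<in> M" "\<And>u a. (u, a) \<in> M \<Longrightarrow> a \<le> norm u"
    using M unfolding dominated_graph_def by blast+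
  ultimately show "a \<le> norm p"
    using extension_value_dominated[OF _ _ lower upper] by blast
next
  have "(z, norm z) \<in> M" "z = z + 0 *\<^sub>R w" "norm z = norm z + 0 * c"
    using M unfolding dominated_graph_def by simp_all
  then show "(z, norm z) \<in> ?G"
    by blast
qed

lemma dominated_graph_maximal_total:
  obtains M where "dominated_graph z M" "\<And>u. \<exists>a. (u, a) \<in> M"
proof -
  have "\<exists>M\<in>{G. dominated_graph z G}. \<forall>G\<in>{G. dominated_graph z G}. M \<subseteq> G \<longrightarrow> G = M"
  proof (rule Zorn_Lemma2, intro ballI)
    fix C
    assume "C \<in> chains {G. dominated_graph z G}"
    then show "\<exists>U\<in>{G. dominated_graph z G}. \<forall>G\<in>C. G \<subseteq> U"
      using dominated_graph_line dominated_graph_Union_chain by (cases "C = {}") blast+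
  qed
  then obtain M where M: "dominated_graph z M"
    and maximal: "\<And>G. dominated_graph z G \<Longrightarrow> M \<subseteq> G \<Longrightarrow> G = M"
    by blast
  have "\<exists>a. (w, a) \<in> M" for w
  proof (rule ccontr)
    assume w: "\<nexists>a. (w, a) \<in> M"
    obtain c where "\<And>u a. (u, a) \<in> M \<Longrightarrow> a - norm (u - w) \<le> c"
      and "\<And>u a. (u, a) \<in> M \<Longrightarrow> c \<le> norm (u + w) - a"
      using dominated_graph_extension_value[OF M] by blast
    then have extension: "dominated_graph z {(u + t *\<^sub>R w, a + t * c) | u a t. (u, a) \<in> M}"
      using dominated_graph_extension[OF M] w by blast
    moreover have "M \<subseteq> {(u + t *\<^sub>R w, a + t * c) | u a t. (u, a) \<in> M}"
      by force
    moreover have "(w, c) \<in> {(u + t *\<^sub>R w, a + t * c) | u a t. (u, a) \<in> M}"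
      using dominated_graph_zero[OF M] by force
    ultimately show False
      using maximal w by blast
  qed
  then show ?thesis
    using that M by blast
qed

theorem exists_norming_functional:
  fixes z :: "'a::real_normed_vector"
  obtains g :: "'a \<Rightarrow>\<^sub>L real" where "norm g \<le> 1" "g z = norm z"
proof -
  obtain M where M: "dominated_graph z M" and total: "\<And>u. \<exists>a. (u, a) \<in> M"
    using dominated_graph_maximal_total by blast
  have functional: "\<And>u a b. (u, a) \<in> M \<Longrightarrow> (u, b) \<in> M \<Longrightarrow> a = b"
    and add_M: "\<And>u a v b. (u, a) \<in> M \<Longrightarrow> (v, b) \<in> M \<Longrightarrow> (u + v, a + b) \<in> M"
    and scale_M: "\<And>u a r. (u, a) \<in> M \<Longrightarrow> (r *\<^sub>R u, r * a) \<in> M"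
    and dominated_M: "\<And>u a. (u, a) \<in> M \<Longrightarrow> a \<le> norm u"
    and "(z, norm z) \<in> M"
    using M unfolding dominated_graph_def by blast+
  define f where "f u = (THE a. (u, a) \<in> M)" for u
  have f: "(u, a) \<in> M \<longleftrightarrow> f u = a" for u a
  proof -
    have unique: "\<exists>!a. (u, a) \<in> M"
      using total[of u] functional by blast
    show ?thesis
    proof
      assume "(u, a) \<in> M"
      then show "f u = a"
        unfolding f_def by (rule the1_equality[OF unique])
    next
      assume "f u = a"
      then show "(u, a) \<in> M"
        using theI'[OF unique] unfolding f_def by simp
    qed
  qed
  have add: "f (u + v) = f u + f v" for u v
    using add_M f by blast
  have scale: "f (r *\<^sub>R u) = r *\<^sub>R f u" for r u
    using scale_M f by auto
  have dominated: "f u \<le> norm u" for u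
    using dominated_M f by blast
  have bound: "norm (f u) \<le> norm u * 1" for u
    using dominated[of u] dominated[of "- u"] scale[of "- 1" u] by simp
  have "bounded_linear f"
    by (rule bounded_linear_intro[OF add scale bound])
  show ?thesis
  proof (rule that[of "Blinfun f"])
    show "norm (Blinfun f) \<le> 1"
      using bound \<open>bounded_linear f\<close> by (intro norm_blinfun_bound) (simp_all add: bounded_linear_Blinfun_apply)
    show "Blinfun f z = norm z"
      using \<open>(z, norm z) \<in> M\<close> f \<open>bounded_linear f\<close> by (simp add: bounded_linear_Blinfun_apply)
  qed
qed

lemma (in Metric_space) mcomplete_closed_cover_contains_mball:
  assumes "mcomplete" "M \<noteq> {}"
    and closed: "\<And>m::nat. closedin mtopology (C m)" and cover: "(\<Union>m. C m) = M"
  obtains m a r where "a \<in> M" "r > 0" "mball a r \<subseteq> C m"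
proof -
  have "mtopology interior_of (\<Union>m. C m) \<noteq> {}"
    using cover interior_of_topspace[of mtopology] \<open>M \<noteq> {}\<close> by simp
  then obtain m where "mtopology interior_of C m \<noteq> {}"
    using metric_Baire_category_alt[OF \<open>mcomplete\<close>, of "range C"] closed by auto
  then show ?thesis
    using that in_interior_of_mball by blast
qed

lemma seminorm_le_of_bounded_on_ball:
  fixes p :: "'a::real_normed_vector \<Rightarrow> real"
  assumes scale: "\<And>c x. p (c *\<^sub>R x) = \<bar>c\<bar> * p x"
    and "r > 0" and bounded: "\<And>h. norm h < r \<Longrightarrow> p h \<le> M"
  shows "p x \<le> 2 * M / r * norm x"
proof (cases "x = 0")
  case True
  then show ?thesis
    using scale[of 0 0] by simp
next
  case False
  define c where "c = r / (2 * norm x)"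
  have "c > 0" "norm (c *\<^sub>R x) < r"
    using \<open>r > 0\<close> False unfolding c_def by simp_all
  then have "c * p x \<le> M"
    using bounded scale by fastforce
  then show ?thesis
    using \<open>c > 0\<close> \<open>r > 0\<close> False unfolding c_def by (simp add: field_simps)
qed

lemma uniform_boundedness_seminorms:
  fixes p :: "'i \<Rightarrow> 'a::banach \<Rightarrow> real"
  assumes continuous: "\<And>i. i \<in> I \<Longrightarrow> continuous_on UNIV (p i)"
    and diff: "\<And>i x y. i \<in> I \<Longrightarrow> p i (x - y) \<le> p i x + p i y"
    and scale: "\<And>i c x. i \<in> I \<Longrightarrow> p i (c *\<^sub>R x) = \<bar>c\<bar> * p i x"
    and pointwise_bounded: "\<And>x. \<exists>B. \<forall>i\<in>I. p i x \<le> B"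
  shows "\<exists>C>0. \<forall>i\<in>I. \<forall>x. p i x \<le> C * norm x"
proof -
  define E where "E m = {x. \<forall>i\<in>I. p i x \<le> real m}" for m :: nat
  have "closed (E m)" for m
    unfolding E_def Collect_ball_eq
    by (intro closed_INT ballI closed_Collect_le continuous continuous_on_const)
  moreover have "x \<in> (\<Union>m. E m)" for x
  proof -
    obtain B where "\<forall>i\<in>I. p i x \<le> B"
      using pointwise_bounded by blast
    then have "x \<in> E (nat \<lceil>B\<rceil>)"
      using real_nat_ceiling_ge[of B] unfolding E_def by fastforce
    then show ?thesis
      by blast
  qed
  ultimately obtain m x0 r where "r > 0" and ball: "ball x0 r \<subseteq> E m"
    using Met_TC.mcomplete_closed_cover_contains_mball[of E] complete_UNIV
    by (metis UNIV_eq_I UNIV_not_empty closedin_mtopology_eq_closed mball_eq_ball mcomplete_iff_complete)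
  have small: "p i h \<le> 2 * real m" if "i \<in> I" "norm h < r" for i h
  proof -
    have "x0 + h \<in> ball x0 r" "x0 \<in> ball x0 r"
      using that \<open>r > 0\<close> by (simp_all add: dist_norm)
    then have "p i (x0 + h) \<le> m" "p i x0 \<le> m"
      using ball \<open>i \<in> I\<close> unfolding E_def by blast+
    then show ?thesis
      using diff[OF \<open>i \<in> I\<close>, of "x0 + h" x0] by simp
  qed
  have "p i x \<le> (4 * real m / r + 1) * norm x" if "i \<in> I" for i x
  proof -
    have "p i x \<le> 2 * (2 * real m) / r * norm x"
      by (rule seminorm_le_of_bounded_on_ball[OF scale[OF that] \<open>r > 0\<close> small[OF that]])
    also have "\<dots> \<le> (4 * real m / r + 1) * norm x"
      by (simp add: distrib_right)
    finally show ?thesis .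
  qed
  then show ?thesis
    using \<open>r > 0\<close> by (intro exI[of _ "4 * real m / r + 1"]) (auto simp: add_nonneg_pos)
qed

locale seq_space =
  fixes S :: "(nat \<Rightarrow> real) set" and N :: "(nat \<Rightarrow> real) \<Rightarrow> real"
  assumes seq_banach: "seq_banach S N" and unit_vectors_basis: "unit_vectors_basis S N"
begin

lemma zero_mem: "(\<lambda>j. 0) \<in> S"
  and add_mem: "a \<in> S \<Longrightarrow> b \<in> S \<Longrightarrow> (\<lambda>j. a j + b j) \<in> S"
  and scale_mem: "a \<in> S \<Longrightarrow> (\<lambda>j. c * a j) \<in> S"
  and N_nonneg: "a \<in> S \<Longrightarrow> 0 \<le> N a"
  and N_eq_0_iff: "a \<in> S \<Longrightarrow> N a = 0 \<longleftrightarrow> a = (\<lambda>j. 0)"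
  and N_scale: "a \<in> S \<Longrightarrow> N (\<lambda>j. c * a j) = \<bar>c\<bar> * N a"
  and N_add_le: "a \<in> S \<Longrightarrow> b \<in> S \<Longrightarrow> N (\<lambda>j. a j + b j) \<le> N a + N b"
  and complete: "\<forall>k. u k \<in> S \<Longrightarrow> \<forall>e>0. \<exists>M. \<forall>m\<ge>M. \<forall>k\<ge>M. N (\<lambda>j. u m j - u k j) < e
      \<Longrightarrow> \<exists>a\<in>S. (\<lambda>k. N (\<lambda>j. u k j - a j)) \<longlonglongrightarrow> 0"
  using seq_banach unfolding seq_banach_def by blast+

lemma unit_vec_mem: "unit_vec n \<in> S"
  and trunc_seq_converges: "a \<in> S \<Longrightarrow> (\<lambda>k. N (\<lambda>j. a j - trunc_seq a k j)) \<longlonglongrightarrow> 0"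
  and trunc_seq_expansion_unique:
    "a \<in> S \<Longrightarrow> (\<lambda>k. N (\<lambda>j. a j - trunc_seq c k j)) \<longlonglongrightarrow> 0 \<Longrightarrow> c = a"
  using unit_vectors_basis unfolding unit_vectors_basis_def by blast+

lemma N_zero: "N (\<lambda>j. 0) = 0"
  using N_eq_0_iff[OF zero_mem] by simp

lemma diff_mem: "a \<in> S \<Longrightarrow> b \<in> S \<Longrightarrow> (\<lambda>j. a j - b j) \<in> S"
  using add_mem[OF _ scale_mem[of b "- 1"], of a] by simp

lemma N_diff_commute: "a \<in> S \<Longrightarrow> b \<in> S \<Longrightarrow> N (\<lambda>j. a j - b j) = N (\<lambda>j. b j - a j)"
  using N_scale[OF diff_mem[of b a], of "- 1"] by simp

lemma N_diff_le: "a \<in> S \<Longrightarrow> b \<in> S \<Longrightarrow> N (\<lambda>j. a j - b j) \<le> N a + N b"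
  using N_add_le[OF _ scale_mem[of b "- 1"], of a] N_scale[of b "- 1"] by simp

lemma N_le_add_diff: "a \<in> S \<Longrightarrow> b \<in> S \<Longrightarrow> N a \<le> N b + N (\<lambda>j. a j - b j)"
  using N_add_le[OF _ diff_mem[of a b], of b] by simp

lemma N_diff_triangle:
  "a \<in> S \<Longrightarrow> b \<in> S \<Longrightarrow> c \<in> S \<Longrightarrow> N (\<lambda>j. a j - c j) \<le> N (\<lambda>j. a j - b j) + N (\<lambda>j. b j - c j)"
  using N_add_le[OF diff_mem[of a b] diff_mem[of b c]] by simp

lemma N_unit_vec_pos: "N (unit_vec n) > 0"
proof -
  have "unit_vec n \<noteq> (\<lambda>j. 0)"
    unfolding unit_vec_def by (metis one_neq_zero)
  then show ?thesis
    using N_eq_0_iff[OF unit_vec_mem] N_nonneg[OF unit_vec_mem] by (metis less_eq_real_def)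
qed

lemma trunc_seq_eq: "trunc_seq c k = (\<lambda>j. if j < k then c j else 0)"
  unfolding trunc_seq_def unit_vec_def
  by (rule ext) (simp add: if_distrib[of "\<lambda>x. _ * x"] cong: if_cong)

lemma trunc_seq_Suc: "trunc_seq c (Suc k) = (\<lambda>j. trunc_seq c k j + c k * unit_vec k j)"
  unfolding trunc_seq_eq unit_vec_def by (rule ext) (auto simp: less_Suc_eq)

lemma trunc_seq_mem: "trunc_seq c k \<in> S"
  by (induction k) (simp_all add: trunc_seq_Suc trunc_seq_eq[of _ 0] zero_mem add_mem scale_mem unit_vec_mem)

lemma trunc_seq_diff: "(\<lambda>j. trunc_seq a k j - trunc_seq b k j) = trunc_seq (\<lambda>n. a n - b n) k"
  and trunc_seq_add: "(\<lambda>j. trunc_seq a k j + trunc_seq b k j) = trunc_seq (\<lambda>n. a n + b n) k"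
  and trunc_seq_scale: "(\<lambda>j. c * trunc_seq a k j) = trunc_seq (\<lambda>n. c * a n) k"
  unfolding trunc_seq_eq by auto

lemma N_trunc_seq_scale: "N (trunc_seq (\<lambda>j. c * a j) k) = \<bar>c\<bar> * N (trunc_seq a k)"
  using N_scale[OF trunc_seq_mem, of c a k] by (simp only: trunc_seq_scale)

lemma suminf_trunc_seq_mult: "(\<Sum>n. trunc_seq a k n * b n) = (\<Sum>n<k. a n * b n)"
  by (subst suminf_finite[of "{..<k}"]) (auto simp: trunc_seq_eq)

lemma N_trunc_seq_le: "N (trunc_seq c k) \<le> (\<Sum>n<k. \<bar>c n\<bar> * N (unit_vec n))"
proof (induction k)
  case 0
  then show ?case
    using N_zero by (simp add: trunc_seq_eq)
next
  case (Suc k)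
  have "N (trunc_seq c (Suc k)) \<le> N (trunc_seq c k) + N (\<lambda>j. c k * unit_vec k j)"
    unfolding trunc_seq_Suc by (intro N_add_le trunc_seq_mem scale_mem unit_vec_mem)
  also have "\<dots> = N (trunc_seq c k) + \<bar>c k\<bar> * N (unit_vec k)"
    using N_scale[OF unit_vec_mem] by simp
  finally show ?case
    using Suc by simp
qed

lemma abs_coordinate_le_trunc_seq_bound:
  assumes "\<And>k. N (trunc_seq a k) \<le> B"
  shows "\<bar>a n\<bar> * N (unit_vec n) \<le> 2 * B"
proof -
  have "(\<lambda>j. a n * unit_vec n j) = (\<lambda>j. trunc_seq a (Suc n) j - trunc_seq a n j)"
    unfolding trunc_seq_Suc by simp
  then have "\<bar>a n\<bar> * N (unit_vec n) \<le> N (trunc_seq a (Suc n)) + N (trunc_seq a n)"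
    using N_scale[OF unit_vec_mem] N_diff_le[OF trunc_seq_mem trunc_seq_mem] by metis
  then show ?thesis
    using assms[of n] assms[of "Suc n"] by linarith
qed

lemma tendsto_N_trunc_seq:
  assumes "\<And>n. ((\<lambda>t. u t n) \<longlongrightarrow> v n) F"
  shows "((\<lambda>t. N (trunc_seq (u t) k)) \<longlongrightarrow> N (trunc_seq v k)) F"
proof -
  define g where "g t = (\<Sum>n<k. \<bar>u t n - v n\<bar> * N (unit_vec n))" for t
  have "norm (N (trunc_seq (u t) k) - N (trunc_seq v k)) \<le> g t" for t
  proof -
    have "N (trunc_seq (u t) k) \<le> N (trunc_seq v k) + N (trunc_seq (\<lambda>n. u t n - v n) k)"
      "N (trunc_seq v k) \<le> N (trunc_seq (u t) k) + N (trunc_seq (\<lambda>n. u t n - v n) k)"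
      using N_le_add_diff[OF trunc_seq_mem trunc_seq_mem, of "u t" k v k]
        N_le_add_diff[OF trunc_seq_mem trunc_seq_mem, of v k "u t" k]
        N_diff_commute[OF trunc_seq_mem trunc_seq_mem, of v k "u t" k]
      by (simp_all add: trunc_seq_diff)
    then show ?thesis
      using N_trunc_seq_le[of "\<lambda>n. u t n - v n" k] unfolding g_def by simp
  qed
  moreover have "(g \<longlongrightarrow> 0) F"
  proof -
    have "(g \<longlongrightarrow> (\<Sum>n<k. \<bar>v n - v n\<bar> * N (unit_vec n))) F"
      unfolding g_def by (intro tendsto_intros assms)
    then show ?thesis
      by simp
  qed
  ultimately have "((\<lambda>t. N (trunc_seq (u t) k) - N (trunc_seq v k)) \<longlongrightarrow> 0) F"
    by (rule Lim_null_comparison[OF always_eventually[OF allI]])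
  then show ?thesis
    by (simp add: LIM_zero_iff)
qed

lemma trunc_seq_bounded: "a \<in> S \<Longrightarrow> \<exists>B. \<forall>k. N (trunc_seq a k) \<le> B"
proof -
  assume "a \<in> S"
  obtain B where B: "\<And>k. norm (N (\<lambda>j. a j - trunc_seq a k j)) \<le> B"
  proof (rule BseqE)
    show "Bseq (\<lambda>k. N (\<lambda>j. a j - trunc_seq a k j))"
      using trunc_seq_converges[OF \<open>a \<in> S\<close>] by (intro convergent_imp_Bseq convergentI)
  qed (use less_imp_le in blast)
  have "N (trunc_seq a k) \<le> N a + B" for k
    using N_le_add_diff[OF trunc_seq_mem \<open>a \<in> S\<close>, of a k] B[of k]
      N_diff_commute[OF trunc_seq_mem \<open>a \<in> S\<close>, of a k] by simp
  then show ?thesis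
    by blast
qed


definition seq_dist :: "(nat \<Rightarrow> real) \<Rightarrow> (nat \<Rightarrow> real) \<Rightarrow> real" where
  "seq_dist a b = (if a \<in> S \<and> b \<in> S then N (\<lambda>j. a j - b j) else 0)"

lemma Metric_space_seq_dist: "Metric_space S seq_dist"
proof
  fix a b
  show "0 \<le> seq_dist a b"
    unfolding seq_dist_def using N_nonneg diff_mem by auto
  show "seq_dist a b = seq_dist b a"
    unfolding seq_dist_def using N_diff_commute by auto
next
  fix a b
  assume "a \<in> S" "b \<in> S"
  then show "seq_dist a b = 0 \<longleftrightarrow> a = b"
    unfolding seq_dist_def using N_eq_0_iff[OF diff_mem] by (auto simp: fun_eq_iff)
next
  fix a b c
  assume "a \<in> S" "b \<in> S" "c \<in> S"
  then show "seq_dist a c \<le> seq_dist a b + seq_dist b c"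
    unfolding seq_dist_def using N_diff_triangle by auto
qed

interpretation S_metric: Metric_space S seq_dist
  by (rule Metric_space_seq_dist)

lemma mcomplete_seq_dist: "S_metric.mcomplete"
  unfolding S_metric.mcomplete_def
proof (intro allI impI)
  fix u
  assume "S_metric.MCauchy u"
  then have mem: "\<forall>k. u k \<in> S"
    unfolding S_metric.MCauchy_def by auto
  moreover have "\<forall>e>0. \<exists>M. \<forall>m\<ge>M. \<forall>k\<ge>M. N (\<lambda>j. u m j - u k j) < e"
    using \<open>S_metric.MCauchy u\<close> mem unfolding S_metric.MCauchy_def seq_dist_def by simp
  ultimately obtain a where "a \<in> S" and lim: "(\<lambda>k. N (\<lambda>j. u k j - a j)) \<longlonglongrightarrow> 0"
    using complete by blast
  have "\<exists>M. \<forall>k\<ge>M. u k \<in> S \<and> seq_dist (u k) a < e" if "e > 0" for e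
    using LIMSEQ_D[OF lim that] mem \<open>a \<in> S\<close> unfolding seq_dist_def by (auto simp: abs_less_iff)
  then show "\<exists>a. limitin S_metric.mtopology u a sequentially"
    using \<open>a \<in> S\<close> unfolding S_metric.limit_metric_sequentially by blast
qed

lemma trunc_bounded_dense_in_ball:
  obtains m :: nat and a0 r where "a0 \<in> S" "r > 0"
    and "\<And>a e. a \<in> S_metric.mball a0 r \<Longrightarrow> e > 0 \<Longrightarrow>
           \<exists>b\<in>S. (\<forall>k. N (trunc_seq b k) \<le> m) \<and> N (\<lambda>j. a j - b j) < e"
proof -
  define E where "E m = {a \<in> S. \<forall>k. N (trunc_seq a k) \<le> real m}" for m :: nat
  define C where "C m = S_metric.mtopology closure_of E m" for m
  have "a \<in> (\<Union>m. C m)" if "a \<in> S" for a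
  proof -
    obtain B where "\<forall>k. N (trunc_seq a k) \<le> B"
      using trunc_seq_bounded[OF \<open>a \<in> S\<close>] by blast
    then have "a \<in> E (nat \<lceil>B\<rceil>)"
      using \<open>a \<in> S\<close> real_nat_ceiling_ge[of B] unfolding E_def by (auto intro: order_trans)
    moreover have "E (nat \<lceil>B\<rceil>) \<subseteq> S"
      unfolding E_def by blast
    ultimately show ?thesis
      unfolding C_def using closure_of_subset[of "E (nat \<lceil>B\<rceil>)" S_metric.mtopology] by auto
  qed
  moreover have "C m \<subseteq> S" for m
    unfolding C_def using closure_of_subset_topspace[of S_metric.mtopology] by simp
  moreover have "closedin S_metric.mtopology (C m)" for m
    unfolding C_def by simp
  ultimately obtain m a0 r where "a0 \<in> S" "r > 0" and ball: "S_metric.mball a0 r \<subseteq> C m"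
    using S_metric.mcomplete_closed_cover_contains_mball[OF mcomplete_seq_dist, of C] zero_mem
    by (metis empty_iff subset_antisym UN_least subsetI)
  have "\<exists>b\<in>S. (\<forall>k. N (trunc_seq b k) \<le> m) \<and> N (\<lambda>j. a j - b j) < e"
    if "a \<in> S_metric.mball a0 r" "e > 0" for a e
  proof -
    have "a \<in> S_metric.mtopology closure_of E m"
      using ball that(1) unfolding C_def by blast
    then obtain b where "b \<in> E m" "b \<in> S_metric.mball a e"
      using \<open>e > 0\<close> unfolding S_metric.metric_closure_of by blast
    then show ?thesis
      unfolding E_def by (auto simp: S_metric.in_mball seq_dist_def)
  qed
  then show ?thesis
    using that \<open>a0 \<in> S\<close> \<open>r > 0\<close> by blast
qed

lemma trunc_bounded_approximation_near_zero:
  obtains B r where "B \<ge> 0" "r > 0"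
    and "\<And>h e. h \<in> S \<Longrightarrow> N h < r \<Longrightarrow> e > 0 \<Longrightarrow>
           \<exists>w\<in>S. (\<forall>k. N (trunc_seq w k) \<le> B) \<and> N (\<lambda>j. h j - w j) < e"
proof -
  obtain m :: nat and a0 r where "a0 \<in> S" "r > 0" and near: "\<And>a e. a \<in> S_metric.mball a0 r \<Longrightarrow> e > 0 \<Longrightarrow>
      \<exists>b\<in>S. (\<forall>k. N (trunc_seq b k) \<le> m) \<and> N (\<lambda>j. a j - b j) < e"
    by (rule trunc_bounded_dense_in_ball, rule that)
  \<comment> \<open>A small h is the difference of the two points a0 + h and a0 of the ball.\<close>
  have "\<exists>w\<in>S. (\<forall>k. N (trunc_seq w k) \<le> 2 * real m) \<and> N (\<lambda>j. h j - w j) < e"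
    if "h \<in> S" "N h < r" "e > 0" for h e
  proof -
    have "(\<lambda>j. a0 j + h j) \<in> S_metric.mball a0 r" "a0 \<in> S_metric.mball a0 r"
      using that \<open>a0 \<in> S\<close> \<open>r > 0\<close> N_zero N_scale[OF \<open>h \<in> S\<close>, of "- 1"]
      by (auto simp: seq_dist_def add_mem)
    then obtain u v where "u \<in> S" "\<forall>k. N (trunc_seq u k) \<le> m" "N (\<lambda>j. a0 j + h j - u j) < e / 2"
      and "v \<in> S" "\<forall>k. N (trunc_seq v k) \<le> m" "N (\<lambda>j. a0 j - v j) < e / 2"
      using near[of _ "e / 2"] \<open>e > 0\<close> by (meson half_gt_zero)
    have "N (trunc_seq (\<lambda>j. u j - v j) k) \<le> 2 * real m" for k
      using N_diff_le[OF trunc_seq_mem trunc_seq_mem, of u k v k] \<open>\<forall>k. N (trunc_seq u k) \<le> m\<close>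
        \<open>\<forall>k. N (trunc_seq v k) \<le> m\<close> by (simp add: trunc_seq_diff) (smt (verit))
    moreover have "N (\<lambda>j. h j - (u j - v j)) \<le> N (\<lambda>j. a0 j + h j - u j) + N (\<lambda>j. a0 j - v j)"
      using N_diff_le[OF diff_mem[OF add_mem[OF \<open>a0 \<in> S\<close> \<open>h \<in> S\<close>] \<open>u \<in> S\<close>]
          diff_mem[OF \<open>a0 \<in> S\<close> \<open>v \<in> S\<close>]]
      by (simp add: algebra_simps)
    ultimately show ?thesis
      using diff_mem[OF \<open>u \<in> S\<close> \<open>v \<in> S\<close>] \<open>N (\<lambda>j. a0 j + h j - u j) < e / 2\<close>
        \<open>N (\<lambda>j. a0 j - v j) < e / 2\<close> by (intro bexI[of _ "\<lambda>j. u j - v j"]) auto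
  qed
  then show ?thesis
    using that[of "2 * real m" r] \<open>r > 0\<close> by simp
qed

lemma approximation_rescale:
  assumes "h \<in> S" "w \<in> S" "l > 0"
    and "\<forall>k. N (trunc_seq w k) \<le> B" "N (\<lambda>j. l * h j - w j) < e * l"
  shows "\<forall>k. N (trunc_seq (\<lambda>j. (1 / l) * w j) k) \<le> B / l" "N (\<lambda>j. h j - (1 / l) * w j) < e"
proof -
  show "\<forall>k. N (trunc_seq (\<lambda>j. (1 / l) * w j) k) \<le> B / l"
    using N_trunc_seq_scale[of "1 / l" w] assms(3,4) by (simp add: divide_right_mono)
  have "(\<lambda>j. h j - (1 / l) * w j) = (\<lambda>j. (1 / l) * (l * h j - w j))"
    using \<open>l > 0\<close> by (auto simp: field_simps)
  then have "N (\<lambda>j. h j - (1 / l) * w j) = (1 / l) * N (\<lambda>j. l * h j - w j)"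
    using N_scale[OF diff_mem[OF scale_mem[OF \<open>h \<in> S\<close>] \<open>w \<in> S\<close>], of "1 / l"] \<open>l > 0\<close> by simp
  also have "\<dots> < e"
    using assms(5) \<open>l > 0\<close> by (simp add: field_simps)
  finally show "N (\<lambda>j. h j - (1 / l) * w j) < e" .
qed

lemma trunc_bounded_approximation:
  obtains K where "K \<ge> 0"
    and "\<And>h e. h \<in> S \<Longrightarrow> e > 0 \<Longrightarrow>
           \<exists>w\<in>S. (\<forall>k. N (trunc_seq w k) \<le> K * N h) \<and> N (\<lambda>j. h j - w j) < e"
proof -
  obtain B r where "B \<ge> 0" "r > 0"
    and near_zero: "\<And>h e. h \<in> S \<Longrightarrow> N h < r \<Longrightarrow> e > 0 \<Longrightarrow>
           \<exists>w\<in>S. (\<forall>k. N (trunc_seq w k) \<le> B) \<and> N (\<lambda>j. h j - w j) < e"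
    by (rule trunc_bounded_approximation_near_zero, rule that)
  have "\<exists>w\<in>S. (\<forall>k. N (trunc_seq w k) \<le> 2 * B / r * N h) \<and> N (\<lambda>j. h j - w j) < e"
    if "h \<in> S" "e > 0" for h e
  proof (cases "N h = 0")
    case True
    then show ?thesis
      using N_eq_0_iff[OF \<open>h \<in> S\<close>] zero_mem N_zero \<open>e > 0\<close>
      by (intro bexI[of _ "\<lambda>j. 0"]) (auto simp: trunc_seq_eq)
  next
    case False
    then have "N h > 0"
      using N_nonneg[OF \<open>h \<in> S\<close>] by simp
    define l where "l = r / (2 * N h)"
    have "l > 0" "B / l = 2 * B / r * N h"
      using \<open>r > 0\<close> \<open>N h > 0\<close> unfolding l_def by simp_all
    moreover have "N (\<lambda>j. l * h j) < r"
      using N_scale[OF \<open>h \<in> S\<close>, of l] \<open>l > 0\<close> \<open>r > 0\<close> \<open>N h > 0\<close> unfolding l_def by simp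
    then obtain w where "w \<in> S" "\<forall>k. N (trunc_seq w k) \<le> B" "N (\<lambda>j. l * h j - w j) < e * l"
      using near_zero[OF scale_mem[OF \<open>h \<in> S\<close>]] \<open>e > 0\<close> \<open>l > 0\<close> by (metis mult_pos_pos)
    ultimately show ?thesis
      using approximation_rescale[OF \<open>h \<in> S\<close> \<open>w \<in> S\<close> \<open>l > 0\<close>] scale_mem[OF \<open>w \<in> S\<close>] by metis
  qed
  then show ?thesis
    using that[of "2 * B / r"] \<open>B \<ge> 0\<close> \<open>r > 0\<close> by simp
qed

lemma coordinatewise_limit_of_trunc_seq_Cauchy:
  assumes Cauchy: "\<And>J J' k. J \<le> J' \<Longrightarrow> N (trunc_seq (\<lambda>n. s J' n - s J n) k) \<le> t J"
    and "t \<longlonglongrightarrow> 0"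
  obtains c where "\<And>n. (\<lambda>J. s J n) \<longlonglongrightarrow> c n"
    and "\<And>J k. N (trunc_seq (\<lambda>n. c n - s J n) k) \<le> t J"
proof -
  have coordinate: "\<bar>s J' n - s J n\<bar> \<le> 2 * t J / N (unit_vec n)" if "J \<le> J'" for J J' n
    using abs_coordinate_le_trunc_seq_bound[OF Cauchy[OF that], of n] N_unit_vec_pos[of n]
    by (simp add: field_simps)
  have "Cauchy (\<lambda>J. s J n)" for n
  proof (rule CauchyI)
    fix e :: real
    assume "e > 0"
    then have "e * N (unit_vec n) / 2 > 0"
      using N_unit_vec_pos[of n] by simp
    then obtain M where M: "\<And>J. J \<ge> M \<Longrightarrow> \<bar>t J\<bar> < e * N (unit_vec n) / 2"
      using LIMSEQ_D[OF \<open>t \<longlonglongrightarrow> 0\<close>] by (metis real_norm_def diff_zero)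
    have less: "\<bar>s J' n - s J n\<bar> < e" if "J \<ge> M" "J \<le> J'" for J J'
    proof -
      have "\<bar>s J' n - s J n\<bar> \<le> 2 * t J / N (unit_vec n)"
        using coordinate[OF \<open>J \<le> J'\<close>] .
      also have "\<dots> < e"
        using M[OF \<open>J \<ge> M\<close>] N_unit_vec_pos[of n] by (simp add: field_simps)
      finally show ?thesis .
    qed
    have "norm (s J n - s J' n) < e" if "J \<ge> M" "J' \<ge> M" for J J'
      using less[of J J'] less[of J' J] that by (cases J J' rule: le_cases) (auto simp: abs_minus_commute)
    then show "\<exists>M. \<forall>m\<ge>M. \<forall>n'\<ge>M. norm (s m n - s n' n) < e"
      by blast
  qed
  then have "\<forall>n. \<exists>l. (\<lambda>J. s J n) \<longlonglongrightarrow> l"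
    by (simp add: Cauchy_convergent_iff convergent_def)
  then obtain c where c: "\<And>n. (\<lambda>J. s J n) \<longlonglongrightarrow> c n"
    by metis
  show ?thesis
  proof (rule that[OF c])
    fix J k
    have "(\<lambda>J'. N (trunc_seq (\<lambda>n. s J' n - s J n) k)) \<longlonglongrightarrow> N (trunc_seq (\<lambda>n. c n - s J n) k)"
      by (intro tendsto_N_trunc_seq tendsto_diff c tendsto_const)
    moreover have "\<exists>M. \<forall>J'\<ge>M. N (trunc_seq (\<lambda>n. s J' n - s J n) k) \<le> t J"
      using Cauchy by blast
    ultimately show "N (trunc_seq (\<lambda>n. c n - s J n) k) \<le> t J"
      by (rule LIMSEQ_le_const2)
  qed
qed

lemma trunc_seq_remainder_bound:
  assumes "h \<in> S" "\<And>J. s J \<in> S" "(\<lambda>J. N (\<lambda>j. h j - s J j)) \<longlonglongrightarrow> 0"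
    and Cauchy: "\<And>J J' k. J \<le> J' \<Longrightarrow> N (trunc_seq (\<lambda>n. s J' n - s J n) k) \<le> t J"
    and "t \<longlonglongrightarrow> 0"
  shows "N (trunc_seq (\<lambda>n. h n - s J n) k) \<le> t J"
proof -
  obtain c where "\<And>n. (\<lambda>J. s J n) \<longlonglongrightarrow> c n"
    and c_bound: "\<And>J k. N (trunc_seq (\<lambda>n. c n - s J n) k) \<le> t J"
    by (metis coordinatewise_limit_of_trunc_seq_Cauchy[OF Cauchy \<open>t \<longlonglongrightarrow> 0\<close>])
  have "c = h"
  proof (rule trunc_seq_expansion_unique[OF \<open>h \<in> S\<close>], rule LIMSEQ_I)
    fix e :: real
    assume "e > 0"
    have "\<forall>\<^sub>F J in sequentially. N (\<lambda>j. h j - s J j) < e / 3 \<and> t J < e / 3"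
      using \<open>e > 0\<close> assms(3) \<open>t \<longlonglongrightarrow> 0\<close> by (auto intro!: eventually_conj order_tendstoD)
    then obtain J where J: "N (\<lambda>j. h j - s J j) < e / 3" "t J < e / 3"
      using eventually_sequentially by auto
    obtain k0 where k0: "\<And>k. k \<ge> k0 \<Longrightarrow> N (\<lambda>j. s J j - trunc_seq (s J) k j) < e / 3"
      using order_tendstoD(2)[OF trunc_seq_converges[OF assms(2)], of "e / 3"] \<open>e > 0\<close>
      by (auto simp: eventually_sequentially)
    have "N (\<lambda>j. h j - trunc_seq c k j) < e" if "k \<ge> k0" for k
    proof -
      have "N (\<lambda>j. h j - trunc_seq c k j)
          \<le> N (\<lambda>j. h j - s J j) + N (\<lambda>j. s J j - trunc_seq (s J) k j)
            + N (\<lambda>j. trunc_seq (s J) k j - trunc_seq c k j)"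
        using N_diff_triangle[OF \<open>h \<in> S\<close> assms(2)[of J] trunc_seq_mem[of c k]]
          N_diff_triangle[OF assms(2)[of J] trunc_seq_mem[of "s J" k] trunc_seq_mem[of c k]] by linarith
      also have "N (\<lambda>j. trunc_seq (s J) k j - trunc_seq c k j) \<le> t J"
        using c_bound[of J k] N_diff_commute[OF trunc_seq_mem[of "s J" k] trunc_seq_mem[of c k]]
        by (simp add: trunc_seq_diff)
      finally show ?thesis
        using J k0[OF that] by linarith
    qed
    then show "\<exists>k0. \<forall>k\<ge>k0. norm (N (\<lambda>j. h j - trunc_seq c k j) - 0) < e"
      using N_nonneg[OF diff_mem[OF \<open>h \<in> S\<close> trunc_seq_mem]] by auto
  qed
  then show ?thesis
    using c_bound by blast
qed

lemma successive_approximation: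
  assumes "K \<ge> 0" "h \<in> S"
    and approximation: "\<And>h e. h \<in> S \<Longrightarrow> e > 0 \<Longrightarrow>
           \<exists>w\<in>S. (\<forall>k. N (trunc_seq w k) \<le> K * N h) \<and> N (\<lambda>j. h j - w j) < e"
  obtains r where "r 0 = h" "\<And>J. r J \<in> S" "\<And>J. N (r J) \<le> N h / 2 ^ J"
    "\<And>J k. N (trunc_seq (\<lambda>n. r J n - r (Suc J) n) k) \<le> K * N h / 2 ^ J"
proof (cases "N h = 0")
  case True
  then show ?thesis
    using that[of "\<lambda>J. h"] \<open>h \<in> S\<close> N_zero by (simp add: trunc_seq_eq)
next
  case False
  then have "N h > 0"
    using N_nonneg[OF \<open>h \<in> S\<close>] by simp
  obtain W where W_mem: "\<And>h e. h \<in> S \<Longrightarrow> e > 0 \<Longrightarrow> W h e \<in> S"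
    and W_trunc: "\<And>h e k. h \<in> S \<Longrightarrow> e > 0 \<Longrightarrow> N (trunc_seq (W h e) k) \<le> K * N h"
    and W_close: "\<And>h e. h \<in> S \<Longrightarrow> e > 0 \<Longrightarrow> N (\<lambda>j. h j - W h e j) < e"
    using approximation by metis
  define e where "e i = N h / 2 ^ Suc i" for i :: nat
  have "e i > 0" for i
    using \<open>N h > 0\<close> unfolding e_def by simp
  define r where "r = rec_nat h (\<lambda>i r. (\<lambda>j. r j - W r (e i) j))"
  have r_Suc: "r (Suc J) = (\<lambda>j. r J j - W (r J) (e J) j)" for J
    unfolding r_def by simp
  have r_mem: "r J \<in> S" for J
  proof (induction J)
    case 0
    then show ?case
      using \<open>h \<in> S\<close> by (simp add: r_def)
  next
    case (Suc J)
    then show ?case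
      unfolding r_Suc using W_mem \<open>e J > 0\<close> by (intro diff_mem)
  qed
  have r_small: "N (r J) \<le> N h / 2 ^ J" for J
  proof (cases J)
    case (Suc i)
    have "N (r (Suc i)) < e i"
      unfolding r_Suc using W_close[OF r_mem[of i] \<open>e i > 0\<close>] .
    then show ?thesis
      unfolding Suc e_def by simp
  qed (simp add: r_def)
  have r_step: "N (trunc_seq (\<lambda>n. r J n - r (Suc J) n) k) \<le> K * N h / 2 ^ J" for J k
  proof -
    have "N (trunc_seq (\<lambda>n. r J n - r (Suc J) n) k) \<le> K * N (r J)"
      unfolding r_Suc using W_trunc[OF r_mem \<open>e J > 0\<close>] by simp
    also have "\<dots> \<le> K * N h / 2 ^ J"
      using mult_left_mono[OF r_small \<open>K \<ge> 0\<close>] by simp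
    finally show ?thesis .
  qed
  show ?thesis
    using that[of r, OF _ r_mem r_small r_step] by (simp add: r_def)
qed

lemma trunc_seq_geometric_Cauchy:
  assumes "C \<ge> 0" and geometric: "\<And>J k. N (trunc_seq (\<lambda>n. r J n - r (Suc J) n) k) \<le> C / 2 ^ J"
    and "J \<le> J'"
  shows "N (trunc_seq (\<lambda>n. r J n - r J' n) k) \<le> 2 * C / 2 ^ J"
proof -
  have "N (trunc_seq (\<lambda>n. r J n - r J' n) k) \<le> 2 * C / 2 ^ J - 2 * C / 2 ^ J'"
    using \<open>J \<le> J'\<close>
  proof (induction J' rule: dec_induct)
    case base
    then show ?case
      using N_zero by (simp add: trunc_seq_eq)
  next
    case (step J')
    have "N (trunc_seq (\<lambda>n. r J n - r (Suc J') n) k)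
        \<le> N (trunc_seq (\<lambda>n. r J n - r J' n) k) + N (trunc_seq (\<lambda>n. r J' n - r (Suc J') n) k)"
      using N_add_le[OF trunc_seq_mem trunc_seq_mem, of "\<lambda>n. r J n - r J' n" k "\<lambda>n. r J' n - r (Suc J') n" k]
      by (simp add: trunc_seq_add)
    also have "\<dots> \<le> (2 * C / 2 ^ J - 2 * C / 2 ^ J') + C / 2 ^ J'"
      using step.IH geometric by (rule add_mono)
    also have "\<dots> = 2 * C / 2 ^ J - 2 * C / 2 ^ Suc J'"
      by (simp add: field_simps)
    finally show ?case .
  qed
  then show ?thesis
    using \<open>C \<ge> 0\<close> by (smt (verit) divide_nonneg_pos zero_less_power)
qed

theorem basis_constant:
  obtains K where "\<And>a k. a \<in> S \<Longrightarrow> N (trunc_seq a k) \<le> K * N a"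
proof -
  obtain K where "K \<ge> 0"
    and approximation: "\<And>h e. h \<in> S \<Longrightarrow> e > 0 \<Longrightarrow>
           \<exists>w\<in>S. (\<forall>k. N (trunc_seq w k) \<le> K * N h) \<and> N (\<lambda>j. h j - w j) < e"
    using trunc_bounded_approximation by blast
  have "N (trunc_seq h k) \<le> 2 * K * N h" if "h \<in> S" for h k
  proof -
    obtain r where "r 0 = h" "\<And>J. r J \<in> S" and r_small: "\<And>J. N (r J) \<le> N h / 2 ^ J"
      and r_step: "\<And>J k. N (trunc_seq (\<lambda>n. r J n - r (Suc J) n) k) \<le> K * N h / 2 ^ J"
      using successive_approximation[OF \<open>K \<ge> 0\<close> \<open>h \<in> S\<close> approximation] by blast
    \<comment> \<open>The partial sums h - r J of the approximations converge to h, and their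
      truncations form a Cauchy sequence with the geometric modulus t.\<close>
    define s where "s J = (\<lambda>j. h j - r J j)" for J
    define t where "t J = 2 * (K * N h) / 2 ^ J" for J :: nat
    have Cauchy: "N (trunc_seq (\<lambda>n. s J' n - s J n) k) \<le> t J" if "J \<le> J'" for J J' k
      using trunc_seq_geometric_Cauchy[OF _ r_step that, of k] \<open>K \<ge> 0\<close> N_nonneg[OF \<open>h \<in> S\<close>]
      unfolding s_def t_def by simp
    have "(\<lambda>J. N h / 2 ^ J) \<longlonglongrightarrow> 0"
      by (rule LIMSEQ_divide_realpow_zero) simp
    then have "(\<lambda>J. N (\<lambda>j. h j - s J j)) \<longlonglongrightarrow> 0"
      by (rule Lim_null_comparison[OF always_eventually[OF allI], rotated])
        (use r_small N_nonneg[OF \<open>\<And>J. r J \<in> S\<close>] in \<open>simp add: s_def\<close>)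
    moreover have "t \<longlonglongrightarrow> 0"
      unfolding t_def by (rule LIMSEQ_divide_realpow_zero) simp
    moreover have "s J \<in> S" for J
      unfolding s_def by (rule diff_mem[OF \<open>h \<in> S\<close> \<open>r J \<in> S\<close>])
    ultimately have "N (trunc_seq (\<lambda>n. h n - s 0 n) k) \<le> t 0"
      using trunc_seq_remainder_bound[where h = h and s = s and t = t] \<open>h \<in> S\<close> Cauchy by blast
    then show ?thesis
      unfolding s_def t_def by (simp add: \<open>r 0 = h\<close>)
  qed
  then show ?thesis
    using that by blast
qed

lemma coordinate_bounded: "\<exists>C. \<forall>a\<in>S. \<bar>a n\<bar> \<le> C * N a"
proof -
  obtain K where K: "\<And>a k. a \<in> S \<Longrightarrow> N (trunc_seq a k) \<le> K * N a"
    using basis_constant by metis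
  have "\<bar>a n\<bar> \<le> 2 * K / N (unit_vec n) * N a" if "a \<in> S" for a
    using abs_coordinate_le_trunc_seq_bound[OF K[OF that], of n] N_unit_vec_pos[of n]
    by (simp add: field_simps)
  then show ?thesis
    by blast
qed

lemma N_le_of_trunc_seq_le:
  assumes "a \<in> S" "\<And>k. N (trunc_seq a k) \<le> B"
  shows "N a \<le> B"
proof -
  have lim: "(\<lambda>k. B + N (\<lambda>j. a j - trunc_seq a k j)) \<longlonglongrightarrow> B + 0"
    by (intro tendsto_intros trunc_seq_converges assms)
  have "N a \<le> B + N (\<lambda>j. a j - trunc_seq a k j)" for k
    using N_le_add_diff[OF assms(1) trunc_seq_mem[of a k]] assms(2)[of k] by linarith
  then have "N a \<le> B + 0"
    by (intro LIMSEQ_le_const[OF lim]) auto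
  then show ?thesis
    by simp
qed

lemma in_dual_sums:
  assumes add: "\<forall>a\<in>S. \<forall>a'\<in>S. f (\<lambda>j. a j + a' j) = f a + f a'"
    and scale: "\<forall>a\<in>S. \<forall>c. f (\<lambda>j. c * a j) = c * f a"
    and bounded: "\<forall>a\<in>S. \<bar>f a\<bar> \<le> K * N a"
    and unit_vec: "\<forall>n. f (unit_vec n) = b n"
    and "a \<in> S"
  shows "(\<lambda>n. a n * b n) sums f a"
proof -
  have f_trunc: "f (trunc_seq a k) = (\<Sum>n<k. a n * b n)" for k
  proof (induction k)
    case 0
    have "f (\<lambda>j. 0 * a j) = 0 * f a"
      using scale \<open>a \<in> S\<close> by blast
    then show ?case
      by (simp add: trunc_seq_eq)
  next
    case (Suc k)
    have "f (trunc_seq a (Suc k)) = f (trunc_seq a k) + f (\<lambda>j. a k * unit_vec k j)"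
      unfolding trunc_seq_Suc by (rule add[rule_format, OF trunc_seq_mem scale_mem[OF unit_vec_mem]])
    then show ?case
      using Suc scale unit_vec unit_vec_mem by simp
  qed
  have remainder: "\<bar>f a - f (trunc_seq a k)\<bar> \<le> K * N (\<lambda>j. a j - trunc_seq a k j)" for k
  proof -
    have "f (\<lambda>j. (a j - trunc_seq a k j) + trunc_seq a k j) = f (\<lambda>j. a j - trunc_seq a k j) + f (trunc_seq a k)"
      by (rule add[rule_format, OF diff_mem[OF \<open>a \<in> S\<close> trunc_seq_mem] trunc_seq_mem])
    then have "f a = f (\<lambda>j. a j - trunc_seq a k j) + f (trunc_seq a k)"
      by simp
    then show ?thesis
      using bounded diff_mem[OF \<open>a \<in> S\<close> trunc_seq_mem[of a k]] by simp
  qed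
  have "(\<lambda>k. K * N (\<lambda>j. a j - trunc_seq a k j)) \<longlonglongrightarrow> 0"
    using tendsto_mult_right_zero[OF trunc_seq_converges[OF \<open>a \<in> S\<close>]] by simp
  then have "(\<lambda>k. f a - f (trunc_seq a k)) \<longlonglongrightarrow> 0"
    by (rule Lim_null_comparison[OF always_eventually[OF allI], rotated]) (simp add: remainder)
  then have "(\<lambda>k. f a - (f a - f (trunc_seq a k))) \<longlonglongrightarrow> f a - 0"
    by (intro tendsto_intros)
  then show ?thesis
    unfolding sums_def f_trunc[symmetric] by simp
qed

lemma in_dualE:
  assumes "in_dual S N b"
  obtains f K where "\<forall>a\<in>S. \<forall>a'\<in>S. f (\<lambda>j. a j + a' j) = f a + f a'"
    "\<forall>a\<in>S. \<forall>c. f (\<lambda>j. c * a j) = c * f a" "\<forall>a\<in>S. \<bar>f a\<bar> \<le> K * N a"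
    "\<forall>n. f (unit_vec n) = b n"
  using assms unfolding in_dual_def by blast

lemma in_dual_pairing:
  assumes "in_dual S N b"
  obtains K where "\<And>a. a \<in> S \<Longrightarrow> summable (\<lambda>n. a n * b n)"
    "\<And>a. a \<in> S \<Longrightarrow> \<bar>\<Sum>n. a n * b n\<bar> \<le> K * N a"
proof -
  obtain f K where f: "\<forall>a\<in>S. \<forall>a'\<in>S. f (\<lambda>j. a j + a' j) = f a + f a'"
    "\<forall>a\<in>S. \<forall>c. f (\<lambda>j. c * a j) = c * f a" "\<forall>a\<in>S. \<bar>f a\<bar> \<le> K * N a"
    "\<forall>n. f (unit_vec n) = b n"
    using in_dualE[OF assms] by blast
  have "summable (\<lambda>n. a n * b n)" "\<bar>\<Sum>n. a n * b n\<bar> \<le> K * N a" if "a \<in> S" for a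
  proof -
    have sums: "(\<lambda>n. a n * b n) sums f a"
      by (rule in_dual_sums[OF f that])
    show "summable (\<lambda>n. a n * b n)"
      using sums by (rule sums_summable)
    show "\<bar>\<Sum>n. a n * b n\<bar> \<le> K * N a"
      using sums_unique[OF sums] f(3) that by force
  qed
  then show ?thesis
    using that by blast
qed

lemma summable_pairing: "in_dual S N b \<Longrightarrow> a \<in> S \<Longrightarrow> summable (\<lambda>n. a n * b n)"
  by (erule in_dual_pairing) blast

lemma bdd_above_pairing:
  assumes "in_dual S N b"
  shows "bdd_above ((\<lambda>a. \<bar>\<Sum>n. a n * b n\<bar>) ` {a\<in>S. N a \<le> 1})"
proof -
  obtain K where K: "\<And>a. a \<in> S \<Longrightarrow> \<bar>\<Sum>n. a n * b n\<bar> \<le> K * N a"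
    by (rule in_dual_pairing[OF assms], rule that)
  have "\<bar>\<Sum>n. a n * b n\<bar> \<le> \<bar>K\<bar>" if "a \<in> S" "N a \<le> 1" for a
    using K[OF that(1)] mult_right_mono[OF abs_ge_self N_nonneg[OF that(1)], of K]
      mult_left_le[OF that(2) abs_ge_zero, of K] by linarith
  then show ?thesis
    unfolding bdd_above_def by blast
qed

lemma dual_norm_nonneg: "in_dual S N b \<Longrightarrow> 0 \<le> dual_norm S N b"
  unfolding dual_norm_def
  by (rule order_trans[OF _ cSUP_upper[OF _ bdd_above_pairing, of "\<lambda>j. 0"]]) (auto simp: zero_mem N_zero)

lemma abs_pairing_le:
  assumes "in_dual S N b" "a \<in> S"
  shows "\<bar>\<Sum>n. a n * b n\<bar> \<le> dual_norm S N b * N a"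
proof (cases "N a = 0")
  case True
  then show ?thesis
    using N_eq_0_iff[OF assms(2)] dual_norm_nonneg[OF assms(1)] by simp
next
  case False
  then have "N a > 0"
    using N_nonneg[OF assms(2)] by simp
  have "(\<lambda>j. (1 / N a) * a j) \<in> {a \<in> S. N a \<le> 1}"
    using scale_mem[OF assms(2), of "1 / N a"] N_scale[OF assms(2), of "1 / N a"] \<open>N a > 0\<close> by simp
  then have "\<bar>\<Sum>n. (1 / N a) * a n * b n\<bar> \<le> dual_norm S N b"
    unfolding dual_norm_def by (rule cSUP_upper[OF _ bdd_above_pairing[OF assms(1)]])
  moreover have "(\<Sum>n. (1 / N a) * a n * b n) = (1 / N a) * (\<Sum>n. a n * b n)"
    using suminf_mult[OF summable_pairing[OF assms], of "1 / N a"] by (simp add: mult.assoc)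
  ultimately have "\<bar>\<Sum>n. a n * b n\<bar> / N a \<le> dual_norm S N b"
    using \<open>N a > 0\<close> by (simp add: abs_mult)
  then show ?thesis
    using \<open>N a > 0\<close> by (simp add: pos_divide_le_eq mult.commute)
qed

lemma abs_partial_pairing_le:
  assumes "in_dual S N b"
  shows "\<bar>\<Sum>n<k. a n * b n\<bar> \<le> dual_norm S N b * N (trunc_seq a k)"
  using abs_pairing_le[OF assms trunc_seq_mem] by (simp add: suminf_trunc_seq_mult)

lemma dual_norm_le:
  assumes "\<And>a. a \<in> S \<Longrightarrow> N a \<le> 1 \<Longrightarrow> \<bar>\<Sum>n. a n * b n\<bar> \<le> C"
  shows "dual_norm S N b \<le> C"
  unfolding dual_norm_def using assms zero_mem N_zero by (intro cSUP_least) auto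

lemma in_dual_diff_trunc_seq:
  assumes "in_dual S N b"
  shows "in_dual S N (\<lambda>j. b j - trunc_seq b k j)"
proof -
  obtain f K where f: "\<forall>a\<in>S. \<forall>a'\<in>S. f (\<lambda>j. a j + a' j) = f a + f a'"
    "\<forall>a\<in>S. \<forall>c. f (\<lambda>j. c * a j) = c * f a" "\<forall>a\<in>S. \<bar>f a\<bar> \<le> K * N a" "\<forall>n. f (unit_vec n) = b n"
    using in_dualE[OF assms] by blast
  obtain C where C: "\<And>n a. a \<in> S \<Longrightarrow> \<bar>a n\<bar> \<le> C n * N a"
    using coordinate_bounded by metis
  define g where "g a = f a - (\<Sum>n<k. a n * b n)" for a
  show ?thesis
    unfolding in_dual_def
  proof (intro exI[of _ g] conjI ballI allI)
    fix a a'
    assume "a \<in> S" "a' \<in> S"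
    then show "g (\<lambda>j. a j + a' j) = g a + g a'"
      unfolding g_def using f(1) by (simp add: distrib_right sum.distrib)
  next
    fix a c
    assume "a \<in> S"
    then show "g (\<lambda>j. c * a j) = c * g a"
      unfolding g_def using f(2) by (simp add: sum_distrib_left right_diff_distrib mult.assoc)
  next
    have "\<bar>g a\<bar> \<le> (K + (\<Sum>n<k. C n * \<bar>b n\<bar>)) * N a" if "a \<in> S" for a
    proof -
      have "\<bar>g a\<bar> \<le> \<bar>f a\<bar> + \<bar>\<Sum>n<k. a n * b n\<bar>"
        unfolding g_def by (rule abs_triangle_ineq4)
      also have "\<dots> \<le> K * N a + (\<Sum>n<k. C n * N a * \<bar>b n\<bar>)"
        using f(3) that C[OF that]
        by (intro add_mono order_trans[OF sum_abs] sum_mono) (auto simp: abs_mult mult_right_mono)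
      also have "\<dots> = (K + (\<Sum>n<k. C n * \<bar>b n\<bar>)) * N a"
        by (simp add: sum_distrib_left sum_distrib_right distrib_left distrib_right mult_ac)
      finally show ?thesis .
    qed
    then show "\<exists>K. \<forall>a\<in>S. \<bar>g a\<bar> \<le> K * N a"
      by blast
  next
    fix m
    have "(\<Sum>n<k. unit_vec m n * b n) = (if m < k then b m else 0)"
      unfolding unit_vec_def by (simp add: if_distrib[of "\<lambda>x. x * _"] sum.delta' cong: if_cong)
    then show "g (unit_vec m) = b m - trunc_seq b k m"
      unfolding g_def using f(4) by (simp add: trunc_seq_eq)
  qed
qed

end

locale reconstructing_pair = seq_space +
  fixes x :: "nat \<Rightarrow> 'a::banach" and y :: "nat \<Rightarrow> 'a \<Rightarrow>\<^sub>L real"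
  assumes coefficients_in_dual: "\<And>g :: 'a \<Rightarrow>\<^sub>L real. in_dual S N (\<lambda>n. blinfun_apply g (x n))"
    and analysis_mem: "\<And>z. (\<lambda>n. blinfun_apply (y n) z) \<in> S"
    and reconstruction: "\<And>z. (\<lambda>n. blinfun_apply (y n) z *\<^sub>R x n) sums z"
begin

lemma functional_sums:
  fixes g :: "'a \<Rightarrow>\<^sub>L real"
  shows "(\<lambda>n. blinfun_apply (y n) z * blinfun_apply g (x n)) sums blinfun_apply g z"
  using bounded_linear.sums[OF blinfun.bounded_linear_right reconstruction, of g z]
  by (simp add: blinfun.scaleR_right)

lemma abs_functional_le:
  fixes g :: "'a \<Rightarrow>\<^sub>L real"
  shows "\<bar>blinfun_apply g z\<bar> \<le> dual_norm S N (\<lambda>n. blinfun_apply g (x n)) * N (\<lambda>n. blinfun_apply (y n) z)"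
proof -
  have "blinfun_apply g z = (\<Sum>n. blinfun_apply (y n) z * blinfun_apply g (x n))"
    by (rule sums_unique[OF functional_sums])
  then show ?thesis
    using abs_pairing_le[OF coefficients_in_dual[of g] analysis_mem[of z]] by simp
qed

lemma frame_upper_bound:
  obtains B where "B > 0" "\<And>z. N (\<lambda>n. blinfun_apply (y n) z) \<le> B * norm z"
proof -
  have "\<exists>B>0. \<forall>k\<in>UNIV. \<forall>z. N (trunc_seq (\<lambda>n. blinfun_apply (y n) z) k) \<le> B * norm z"
  proof (rule uniform_boundedness_seminorms)
    fix k
    show "continuous_on UNIV (\<lambda>z. N (trunc_seq (\<lambda>n. blinfun_apply (y n) z) k))"
      unfolding continuous_on_def
      by (intro ballI tendsto_N_trunc_seq blinfun.tendsto tendsto_const tendsto_ident_at)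
    fix z1 z2 :: 'a
    show "N (trunc_seq (\<lambda>n. blinfun_apply (y n) (z1 - z2)) k)
        \<le> N (trunc_seq (\<lambda>n. blinfun_apply (y n) z1) k) + N (trunc_seq (\<lambda>n. blinfun_apply (y n) z2) k)"
      using N_diff_le[OF trunc_seq_mem trunc_seq_mem, of "\<lambda>n. y n z1" k "\<lambda>n. y n z2" k]
      by (simp add: trunc_seq_diff blinfun.diff_right)
  next
    fix k c and z :: 'a
    show "N (trunc_seq (\<lambda>n. blinfun_apply (y n) (c *\<^sub>R z)) k)
        = \<bar>c\<bar> * N (trunc_seq (\<lambda>n. blinfun_apply (y n) z) k)"
      using N_trunc_seq_scale[of c "\<lambda>n. y n z" k] by (simp add: blinfun.scaleR_right)
  next
    fix z :: 'a
    show "\<exists>B. \<forall>k\<in>UNIV. N (trunc_seq (\<lambda>n. blinfun_apply (y n) z) k) \<le> B"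
      using trunc_seq_bounded[OF analysis_mem] by blast
  qed
  then show ?thesis
    using that N_le_of_trunc_seq_le[OF analysis_mem] by (metis UNIV_I)
qed

lemma partial_pairings_uniformly_bounded:
  "\<exists>B>0. \<forall>i\<in>{a \<in> S. N a \<le> 1} \<times> UNIV. \<forall>g :: 'a \<Rightarrow>\<^sub>L real.
     \<bar>\<Sum>n<snd i. fst i n * blinfun_apply g (x n)\<bar> \<le> B * norm g"
proof (rule uniform_boundedness_seminorms)
  fix i :: "(nat \<Rightarrow> real) \<times> nat"
  show "continuous_on UNIV (\<lambda>g :: 'a \<Rightarrow>\<^sub>L real. \<bar>\<Sum>n<snd i. fst i n * blinfun_apply g (x n)\<bar>)"
    by (intro continuous_intros)
  fix g1 g2 :: "'a \<Rightarrow>\<^sub>L real"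
  show "\<bar>\<Sum>n<snd i. fst i n * blinfun_apply (g1 - g2) (x n)\<bar>
      \<le> \<bar>\<Sum>n<snd i. fst i n * blinfun_apply g1 (x n)\<bar> + \<bar>\<Sum>n<snd i. fst i n * blinfun_apply g2 (x n)\<bar>"
    by (simp add: blinfun.diff_left right_diff_distrib sum_subtractf)
next
  fix i :: "(nat \<Rightarrow> real) \<times> nat" and c and g :: "'a \<Rightarrow>\<^sub>L real"
  show "\<bar>\<Sum>n<snd i. fst i n * blinfun_apply (c *\<^sub>R g) (x n)\<bar>
      = \<bar>c\<bar> * \<bar>\<Sum>n<snd i. fst i n * blinfun_apply g (x n)\<bar>"
    by (simp add: blinfun.scaleR_left sum_distrib_left abs_mult[symmetric] mult_ac)
next
  fix g :: "'a \<Rightarrow>\<^sub>L real"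
  obtain K where K: "\<And>a k. a \<in> S \<Longrightarrow> N (trunc_seq a k) \<le> K * N a"
    using basis_constant by metis
  have "\<bar>\<Sum>n<k. a n * blinfun_apply g (x n)\<bar> \<le> dual_norm S N (\<lambda>n. blinfun_apply g (x n)) * \<bar>K\<bar>"
    if "a \<in> S" "N a \<le> 1" for a k
  proof -
    have "\<bar>\<Sum>n<k. a n * blinfun_apply g (x n)\<bar>
        \<le> dual_norm S N (\<lambda>n. blinfun_apply g (x n)) * N (trunc_seq a k)"
      by (rule abs_partial_pairing_le[OF coefficients_in_dual])
    also have "N (trunc_seq a k) \<le> \<bar>K\<bar>"
      using K[OF that(1), of k] mult_right_mono[OF abs_ge_self N_nonneg[OF that(1)], of K]
        mult_left_le[OF that(2) abs_ge_zero, of K] by linarith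
    finally show ?thesis
      using dual_norm_nonneg[OF coefficients_in_dual] by (simp add: mult_left_mono)
  qed
  then show "\<exists>B. \<forall>i\<in>{a \<in> S. N a \<le> 1} \<times> UNIV. \<bar>\<Sum>n<snd i. fst i n * blinfun_apply g (x n)\<bar> \<le> B"
    by auto
qed

lemma coframe_upper_bound:
  obtains B where "B > 0" "\<And>g. dual_norm S N (\<lambda>n. blinfun_apply g (x n)) \<le> B * norm g"
proof -
  obtain B where "B > 0" and B: "\<And>a k g. a \<in> S \<Longrightarrow> N a \<le> 1 \<Longrightarrow>
      \<bar>\<Sum>n<k. a n * blinfun_apply g (x n)\<bar> \<le> B * norm (g :: 'a \<Rightarrow>\<^sub>L real)"
    using partial_pairings_uniformly_bounded by fastforce
  have "dual_norm S N (\<lambda>n. blinfun_apply g (x n)) \<le> B * norm g" for g :: "'a \<Rightarrow>\<^sub>L real"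
  proof (rule dual_norm_le)
    fix a
    assume "a \<in> S" "N a \<le> 1"
    have "(\<lambda>k. \<bar>\<Sum>n<k. a n * blinfun_apply g (x n)\<bar>) \<longlonglongrightarrow> \<bar>\<Sum>n. a n * blinfun_apply g (x n)\<bar>"
      by (intro tendsto_intros summable_LIMSEQ summable_pairing coefficients_in_dual \<open>a \<in> S\<close>)
    then show "\<bar>\<Sum>n. a n * blinfun_apply g (x n)\<bar> \<le> B * norm g"
      using B[OF \<open>a \<in> S\<close> \<open>N a \<le> 1\<close>] by (intro LIMSEQ_le_const2) auto
  qed
  then show ?thesis
    using that \<open>B > 0\<close> by blast
qed

lemma frame_lower_bound:
  obtains A where "A > 0" "\<And>z. A * norm z \<le> N (\<lambda>n. blinfun_apply (y n) z)"
proof -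
  obtain B where "B > 0" and B: "\<And>g. dual_norm S N (\<lambda>n. blinfun_apply g (x n)) \<le> B * norm g"
    using coframe_upper_bound by blast
  have "norm z \<le> B * N (\<lambda>n. blinfun_apply (y n) z)" for z
  proof -
    obtain g :: "'a \<Rightarrow>\<^sub>L real" where "norm g \<le> 1" "blinfun_apply g z = norm z"
      by (rule exists_norming_functional)
    then have "norm z \<le> dual_norm S N (\<lambda>n. blinfun_apply g (x n)) * N (\<lambda>n. blinfun_apply (y n) z)"
      using abs_functional_le[of g z] by simp
    also have "\<dots> \<le> B * N (\<lambda>n. blinfun_apply (y n) z)"
      using B[of g] \<open>norm g \<le> 1\<close> \<open>B > 0\<close> N_nonneg[OF analysis_mem]
      by (intro mult_right_mono) (auto intro: order_trans mult_left_le)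
    finally show ?thesis .
  qed
  then show ?thesis
    using that[of "1 / B"] \<open>B > 0\<close> by (simp add: field_simps)
qed

lemma coframe_lower_bound:
  obtains A where "A > 0" "\<And>g. A * norm g \<le> dual_norm S N (\<lambda>n. blinfun_apply g (x n))"
proof -
  obtain B where "B > 0" and B: "\<And>z. N (\<lambda>n. blinfun_apply (y n) z) \<le> B * norm z"
    using frame_upper_bound by blast
  have "norm g \<le> B * dual_norm S N (\<lambda>n. blinfun_apply g (x n))" for g :: "'a \<Rightarrow>\<^sub>L real"
  proof (rule norm_blinfun_bound)
    show "0 \<le> B * dual_norm S N (\<lambda>n. blinfun_apply g (x n))"
      using \<open>B > 0\<close> dual_norm_nonneg[OF coefficients_in_dual] by simp
    fix z
    have "norm (blinfun_apply g z)
        \<le> dual_norm S N (\<lambda>n. blinfun_apply g (x n)) * N (\<lambda>n. blinfun_apply (y n) z)"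
      using abs_functional_le by simp
    also have "\<dots> \<le> dual_norm S N (\<lambda>n. blinfun_apply g (x n)) * (B * norm z)"
      using B dual_norm_nonneg[OF coefficients_in_dual] by (intro mult_left_mono)
    finally show "norm (blinfun_apply g z) \<le> B * dual_norm S N (\<lambda>n. blinfun_apply g (x n)) * norm z"
      by (simp add: mult_ac)
  qed
  then show ?thesis
    using that[of "1 / B"] \<open>B > 0\<close> by (simp add: field_simps)
qed

lemma norm_dual_remainder_le:
  fixes g :: "'a \<Rightarrow>\<^sub>L real"
  assumes "B \<ge> 0" and B: "\<And>z. N (\<lambda>n. blinfun_apply (y n) z) \<le> B * norm z"
  defines "b \<equiv> \<lambda>n. blinfun_apply g (x n)"
  shows "norm (g - (\<Sum>n<k. b n *\<^sub>R y n)) \<le> B * dual_norm S N (\<lambda>j. b j - trunc_seq b k j)"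
proof (rule norm_blinfun_bound)
  have remainder_in_dual: "in_dual S N (\<lambda>j. b j - trunc_seq b k j)"
    unfolding b_def by (rule in_dual_diff_trunc_seq[OF coefficients_in_dual])
  then show "0 \<le> B * dual_norm S N (\<lambda>j. b j - trunc_seq b k j)"
    using \<open>B \<ge> 0\<close> dual_norm_nonneg by simp
  fix z
  let ?a = "\<lambda>n. blinfun_apply (y n) z"
  have "(\<lambda>n. ?a n * (b n - trunc_seq b k n)) sums (blinfun_apply g z - (\<Sum>n<k. ?a n * b n))"
    using sums_diff[OF functional_sums sums_finite[of "{..<k}" "\<lambda>n. ?a n * trunc_seq b k n"]]
    by (simp add: b_def trunc_seq_eq right_diff_distrib)
  then have "blinfun_apply (g - (\<Sum>n<k. b n *\<^sub>R y n)) z = (\<Sum>n. ?a n * (b n - trunc_seq b k n))"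
    by (simp add: sums_unique[symmetric] blinfun.diff_left blinfun.sum_left blinfun.scaleR_left mult.commute)
  also have "\<bar>\<dots>\<bar> \<le> dual_norm S N (\<lambda>j. b j - trunc_seq b k j) * N ?a"
    by (rule abs_pairing_le[OF remainder_in_dual analysis_mem])
  also have "\<dots> \<le> dual_norm S N (\<lambda>j. b j - trunc_seq b k j) * (B * norm z)"
    using B dual_norm_nonneg[OF remainder_in_dual] by (intro mult_left_mono)
  finally show "norm (blinfun_apply (g - (\<Sum>n<k. b n *\<^sub>R y n)) z)
      \<le> B * dual_norm S N (\<lambda>j. b j - trunc_seq b k j) * norm z"
    by (simp add: mult_ac)
qed

lemma dual_expansion:
  fixes g :: "'a \<Rightarrow>\<^sub>L real"
  assumes "coord_functionals_basis S N"
  shows "(\<lambda>n. blinfun_apply g (x n) *\<^sub>R y n) sums g"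
proof -
  obtain B where "B > 0" and B: "\<And>z. N (\<lambda>n. blinfun_apply (y n) z) \<le> B * norm z"
    using frame_upper_bound by blast
  define b where "b = (\<lambda>n. blinfun_apply g (x n))"
  have "(\<lambda>k. dual_norm S N (\<lambda>j. b j - trunc_seq b k j)) \<longlonglongrightarrow> 0"
    using assms coefficients_in_dual unfolding coord_functionals_basis_def b_def by blast
  then have "(\<lambda>k. B * dual_norm S N (\<lambda>j. b j - trunc_seq b k j)) \<longlonglongrightarrow> 0"
    by (rule tendsto_mult_right_zero)
  then have "(\<lambda>k. (\<Sum>n<k. b n *\<^sub>R y n) - g) \<longlonglongrightarrow> 0"
  proof (rule Lim_null_comparison[OF always_eventually[OF allI], rotated])
    fix k
    show "norm ((\<Sum>n<k. b n *\<^sub>R y n) - g) \<le> B * dual_norm S N (\<lambda>j. b j - trunc_seq b k j)"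
      using norm_dual_remainder_le[OF less_imp_le[OF \<open>B > 0\<close>] B, of g k]
      unfolding b_def by (simp add: norm_minus_commute)
  qed
  then show ?thesis
    unfolding sums_def b_def by (simp add: LIM_zero_iff)
qed

end

theorem theorem5:
  fixes S :: "(nat \<Rightarrow> real) set" and N :: "(nat \<Rightarrow> real) \<Rightarrow> real"
    and x :: "nat \<Rightarrow> 'a::banach" and y :: "nat \<Rightarrow> ('a \<Rightarrow>\<^sub>L real)"
  assumes "seq_banach S N"
    and "unit_vectors_basis S N"
    and "coord_functionals_basis S N"
    and "\<forall>g::'a \<Rightarrow>\<^sub>L real. in_dual S N (\<lambda>n. blinfun_apply g (x n))"
    and "\<forall>z. (\<lambda>n. blinfun_apply (y n) z) \<in> S"
    and "\<forall>z. (\<lambda>n. blinfun_apply (y n) z *\<^sub>R x n) sums z"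
  shows "is_cross_frame S N x y"
proof -
  interpret reconstructing_pair S N x y
    using assms by unfold_locales auto
  obtain A1 where "A1 > 0" "\<And>z. A1 * norm z \<le> N (\<lambda>n. blinfun_apply (y n) z)"
    using frame_lower_bound by blast
  moreover obtain B1 where "B1 > 0" "\<And>z. N (\<lambda>n. blinfun_apply (y n) z) \<le> B1 * norm z"
    using frame_upper_bound by blast
  moreover obtain A2 where "A2 > 0" "\<And>g. A2 * norm g \<le> dual_norm S N (\<lambda>n. blinfun_apply g (x n))"
    using coframe_lower_bound by blast
  moreover obtain B2 where "B2 > 0" "\<And>g. dual_norm S N (\<lambda>n. blinfun_apply g (x n)) \<le> B2 * norm g"
    using coframe_upper_bound by blast
  ultimately have "is_frame S N y" "is_coframe S N x"
    unfolding is_frame_def is_coframe_def using analysis_mem coefficients_in_dual by blast+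
  then show ?thesis
    unfolding is_cross_frame_def using reconstruction dual_expansion[OF assms(3)] by blast
qed

end
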